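(* Let $(D,\tau,d,\Delta)$ be a TMO instance and let $k\in\{1,\dots,d\}$. Let $D'_k$ be the graph obtained by identifying the sink of the gadget $G_k$ with the source $s$ of $D$ (so $D'_k$ has source $s'$ and sink $t$, and travel times $\tau$ on $D$ and as specified on $G_k$). Then every convoy routing for $(D,\tau,d,\Delta)$ using exactly $k$ paths can be transformed into $k$ pairwise arc-disjoint $s'$-$t$-paths in $D'_k$ whose maximum length equals the makespan of the convoy routing, and conversely every collection of $k$ pairwise arc-disjoint $s'$-$t$-paths in $D'_k$ can be transformed into a convoy routing for $(D,\tau,d,\Delta)$ using $k$ paths whose makespan equals the maximum length of the paths. In particular, the minimum makespan over convoy routings with exactly $k$ paths equals the optimum of \textsc{Min-Max Disjoint Paths} on $D'_k$ with $k$ paths.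
   Context: TMO instance $(D,\tau,d,\Delta)$: directed graph $D=(V,A)$ with source $s$, sink $t$, travel times $\tau:A\to\mathbb{Z}_{\ge0}$, $d\in\mathbb{Z}_{\ge1}$ trains and headway $\Delta\in\mathbb{Z}_{\ge1}$. A convoy routing $(\boldsymbol{P},\boldsymbol{\sigma})$ consists of $k\le d$ pairwise arc-disjoint $s$-$t$-paths $P_1,\dots,P_k$ in $D$ and $\boldsymbol{\sigma}\in\mathbb{Z}_{\ge1}^k$ with $\sum_i\sigma_i=d$; its makespan is $\max_{i\in[k]}\{\tau(P_i)+(\sigma_i-1)\Delta\}$, where $\tau(P)=\sum_{a\in P}\tau_a$. The gadget $G_k$ is a bundle graph from $s'$ to its sink: a sequence of $d-k$ consecutive bundles (vertices $u_0=s',u_1,\dots,u_{d-k}$), where the $j$-th bundle consists of $k$ parallel arcs from $u_{j-1}$ to $u_j$, exactly one with travel time $\Delta$ and $k-1$ with travel time $0$; if $d=k$ the gadget is the single vertex $s'=s$. \textsc{Min-Max Disjoint Paths}: find $k$ pairwise arc-disjoint source-sink paths minimizing the maximum path length. *)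

theory Defs
  imports Main
begin

fun is_walk :: "('a \<Rightarrow> 'v) \<Rightarrow> ('a \<Rightarrow> 'v) \<Rightarrow> 'v \<Rightarrow> 'a list \<Rightarrow> 'v \<Rightarrow> bool" where
  "is_walk ta ha u [] w = (u = w)"
| "is_walk ta ha u (a # ps) w = (ta a = u \<and> is_walk ta ha (ha a) ps w)"

definition is_path :: "'a set \<Rightarrow> ('a \<Rightarrow> 'v) \<Rightarrow> ('a \<Rightarrow> 'v) \<Rightarrow> 'v \<Rightarrow> 'a list \<Rightarrow> 'v \<Rightarrow> bool" where
  "is_path A ta ha u P w \<longleftrightarrow> set P \<subseteq> A \<and> is_walk ta ha u P w \<and> distinct (u # map ha P)"

definition path_length :: "('a \<Rightarrow> nat) \<Rightarrow> 'a list \<Rightarrow> nat" where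
  "path_length \<tau> P = sum_list (map \<tau> P)"

definition arc_disjoint :: "nat \<Rightarrow> (nat \<Rightarrow> 'a list) \<Rightarrow> bool" where
  "arc_disjoint k P \<longleftrightarrow> (\<forall>i<k. \<forall>j<k. i \<noteq> j \<longrightarrow> set (P i) \<inter> set (P j) = {})"

definition disjoint_paths :: "'a set \<Rightarrow> ('a \<Rightarrow> 'v) \<Rightarrow> ('a \<Rightarrow> 'v) \<Rightarrow> 'v \<Rightarrow> 'v \<Rightarrow> nat \<Rightarrow> (nat \<Rightarrow> 'a list) \<Rightarrow> bool" where
  "disjoint_paths A ta ha u w k P \<longleftrightarrow> (\<forall>i<k. is_path A ta ha u (P i) w) \<and> arc_disjoint k P"

definition max_length :: "('a \<Rightarrow> nat) \<Rightarrow> nat \<Rightarrow> (nat \<Rightarrow> 'a list) \<Rightarrow> nat" where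
  "max_length \<tau> k P = Max ((\<lambda>i. path_length \<tau> (P i)) ` {..<k})"

definition convoy_routing :: "'a set \<Rightarrow> ('a \<Rightarrow> 'v) \<Rightarrow> ('a \<Rightarrow> 'v) \<Rightarrow> 'v \<Rightarrow> 'v \<Rightarrow> nat \<Rightarrow> nat
    \<Rightarrow> (nat \<Rightarrow> 'a list) \<Rightarrow> (nat \<Rightarrow> nat) \<Rightarrow> bool" where
  "convoy_routing A ta ha s t d k P \<sigma> \<longleftrightarrow>
     1 \<le> k \<and> k \<le> d \<and> disjoint_paths A ta ha s t k P \<and>
     (\<forall>i<k. 1 \<le> \<sigma> i) \<and> (\<Sum>i<k. \<sigma> i) = d"

definition makespan :: "('a \<Rightarrow> nat) \<Rightarrow> nat \<Rightarrow> nat \<Rightarrow> (nat \<Rightarrow> 'a list) \<Rightarrow> (nat \<Rightarrow> nat) \<Rightarrow> nat" where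
  "makespan \<tau> \<Delta> k P \<sigma> = Max ((\<lambda>i. path_length \<tau> (P i) + (\<sigma> i - 1) * \<Delta>) ` {..<k})"

text \<open>The graph D'_k: arcs Inl a for arcs a of D, and Inr (j,i) for the
  (j+1)-th bundle (j < d-k), i-th parallel arc (i < k); arc i = 0 has travel
  time Delta, the others 0. Bundle vertices u_j are Inr j for j < d-k, and
  u_(d-k) is identified with Inl s.\<close>

definition gvert :: "nat \<Rightarrow> nat \<Rightarrow> 'v \<Rightarrow> nat \<Rightarrow> 'v + nat" where
  "gvert d k s j = (if j = d - k then Inl s else Inr j)"

definition Dk_arcs :: "'a set \<Rightarrow> nat \<Rightarrow> nat \<Rightarrow> ('a + nat \<times> nat) set" where
  "Dk_arcs A d k = Inl ` A \<union> {Inr (j, i) | j i. j < d - k \<and> i < k}"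

fun Dk_tail :: "('a \<Rightarrow> 'v) \<Rightarrow> nat \<Rightarrow> nat \<Rightarrow> 'v \<Rightarrow> ('a + nat \<times> nat) \<Rightarrow> 'v + nat" where
  "Dk_tail ta d k s (Inl a) = Inl (ta a)"
| "Dk_tail ta d k s (Inr (j, i)) = gvert d k s j"

fun Dk_head :: "('a \<Rightarrow> 'v) \<Rightarrow> nat \<Rightarrow> nat \<Rightarrow> 'v \<Rightarrow> ('a + nat \<times> nat) \<Rightarrow> 'v + nat" where
  "Dk_head ha d k s (Inl a) = Inl (ha a)"
| "Dk_head ha d k s (Inr (j, i)) = gvert d k s (Suc j)"

fun Dk_time :: "('a \<Rightarrow> nat) \<Rightarrow> nat \<Rightarrow> ('a + nat \<times> nat) \<Rightarrow> nat" where
  "Dk_time \<tau> \<Delta> (Inl a) = \<tau> a"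
| "Dk_time \<tau> \<Delta> (Inr (j, i)) = (if i = 0 then \<Delta> else 0)"

definition Dk_source :: "nat \<Rightarrow> nat \<Rightarrow> 'v \<Rightarrow> 'v + nat" where
  "Dk_source d k s = gvert d k s 0"

end

theory Submission
  imports Defs "HOL-Combinatorics.Transposition"
begin

text \<open>Every \<open>s'\<close>-\<open>t\<close>-path of \<open>D'_k\<close> crosses all \<open>d - k\<close> bundles before entering \<open>D\<close> at \<open>s\<close>,
  and \<open>k\<close> arc-disjoint such paths use the \<open>k\<close> arcs of each bundle once each, so in every
  bundle exactly one of them pays \<open>\<Delta>\<close>. A path paying \<open>\<Delta>\<close> in \<open>\<sigma>\<^sub>i - 1\<close> bundles has length
  \<open>\<tau>(P\<^sub>i) + (\<sigma>\<^sub>i - 1)\<Delta>\<close>, the arrival time of a convoy of \<open>\<sigma>\<^sub>i\<close> trains on \<open>P\<^sub>i\<close>, and the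
  \<open>\<sigma>\<^sub>i\<close> sum to \<open>k + (d - k) = d\<close>. Conversely, given \<open>\<sigma>\<close>, hand \<open>\<sigma>\<^sub>i - 1\<close> of the bundles to path \<open>i\<close>
  and let the owner of a bundle take its \<open>\<Delta>\<close>-arc and the other paths its \<open>0\<close>-arcs.\<close>

lemma is_walk_append_left:
  "is_walk ta ha u xs v \<Longrightarrow> is_walk ta ha u (xs @ ys) w \<longleftrightarrow> is_walk ta ha v ys w"
  by (induction xs arbitrary: u) auto

lemma is_walk_chain:
  assumes "m \<le> n" and "\<And>j. ta (f j) = x j" and "\<And>j. ha (f j) = x (Suc j)"
  shows "is_walk ta ha (x m) (map f [m..<n]) (x n)"
  using assms(1)
proof (induction "n - m" arbitrary: m)
  case 0
  then show ?case by simp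
next
  case (Suc l)
  then have "[m..<n] = m # [Suc m..<n]" by (simp add: upt_conv_Cons)
  with Suc show ?case by (simp add: assms(2,3))
qed

lemma is_walk_map_iff:
  assumes "inj g" and "\<And>a. ta' (f a) = g (ta a)" and "\<And>a. ha' (f a) = g (ha a)"
  shows "is_walk ta' ha' (g u) (map f P) (g w) \<longleftrightarrow> is_walk ta ha u P w"
  by (induction P arbitrary: u) (auto simp: assms inj_eq)

definition Dk_path :: "nat \<Rightarrow> nat \<Rightarrow> (nat \<Rightarrow> nat) \<Rightarrow> 'a list \<Rightarrow> ('a + nat \<times> nat) list" where
  "Dk_path d k c P = map (\<lambda>j. Inr (j, c j)) [0..<d - k] @ map Inl P"

lemma set_Dk_path:
  "set (Dk_path d k c P) = (\<lambda>j. Inr (j, c j)) ` {..<d - k} \<union> Inl ` set P"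
  by (auto simp: Dk_path_def)

lemma walk_Dk_path_iff:
  "is_walk (Dk_tail ta d k s) (Dk_head ha d k s) (Dk_source d k s) (Dk_path d k c P) (Inl t)
     \<longleftrightarrow> is_walk ta ha s P t"
proof -
  have "is_walk (Dk_tail ta d k s) (Dk_head ha d k s) (gvert d k s 0)
      (map (\<lambda>j. Inr (j, c j)) [0..<d - k]) (gvert d k s (d - k))"
    by (rule is_walk_chain) simp_all
  then show ?thesis
    by (simp add: Dk_path_def Dk_source_def is_walk_append_left is_walk_map_iff gvert_def)
qed

lemma vertices_Dk_path:
  "Dk_source d k s # map (Dk_head ha d k s) (Dk_path d k c P)
     = map Inr [0..<d - k] @ map Inl (s # map ha P)"
proof -
  have "map (Dk_head ha d k s) (map (\<lambda>j. Inr (j, c j)) [0..<d - k])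
      = map (gvert d k s) (map Suc [0..<d - k])"
    by simp
  also have "\<dots> = map (gvert d k s) [1..<Suc (d - k)]"
    by (simp only: map_Suc_upt One_nat_def)
  finally have "Dk_source d k s # map (Dk_head ha d k s) (map (\<lambda>j. Inr (j, c j)) [0..<d - k])
      = map (gvert d k s) [0..<Suc (d - k)]"
    by (simp add: Dk_source_def upt_conv_Cons)
  also have "\<dots> = map Inr [0..<d - k] @ [Inl s]"
    by (simp add: gvert_def)
  finally show ?thesis
    by (simp add: Dk_path_def comp_def)
qed

lemma is_path_Dk_path_iff:
  "is_path (Dk_arcs A d k) (Dk_tail ta d k s) (Dk_head ha d k s) (Dk_source d k s)
      (Dk_path d k c P) (Inl t)
     \<longleftrightarrow> (\<forall>j<d - k. c j < k) \<and> is_path A ta ha s P t"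
proof -
  have "set (Dk_path d k c P) \<subseteq> Dk_arcs A d k \<longleftrightarrow> (\<forall>j<d - k. c j < k) \<and> set P \<subseteq> A"
    by (auto simp: set_Dk_path Dk_arcs_def)
  moreover have "distinct (map Inr [0..<d - k] @ map Inl (s # map ha P))
      \<longleftrightarrow> distinct (s # map ha P)"
    by (simp only: distinct_append distinct_map) (auto simp: inj_on_def)
  ultimately show ?thesis
    unfolding is_path_def walk_Dk_path_iff vertices_Dk_path by blast
qed

lemma Dk_walk_from_Inl:
  assumes "set Q \<subseteq> Dk_arcs A d k"
    and "is_walk (Dk_tail ta d k s) (Dk_head ha d k s) (Inl x) Q w"
  shows "\<exists>P. Q = map Inl P"
  using assms
proof (induction Q arbitrary: x)
  case Nil
  then show ?case by simp
next
  case (Cons a Q)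
  then obtain b where "a = Inl b"
    by (cases a) (auto simp: Dk_arcs_def gvert_def split: if_splits)
  with Cons obtain P where "Q = map Inl P"
    by auto
  with \<open>a = Inl b\<close> have "a # Q = map Inl (b # P)"
    by simp
  then show ?case ..
qed

lemma Dk_walk_from_gvert:
  assumes "m \<le> d - k" and "set Q \<subseteq> Dk_arcs A d k"
    and "is_walk (Dk_tail ta d k s) (Dk_head ha d k s) (gvert d k s m) Q (Inl y)"
  shows "\<exists>c P. Q = map (\<lambda>j. Inr (j, c j)) [m..<d - k] @ map Inl P"
  using assms
proof (induction "d - k - m" arbitrary: m Q)
  case 0
  then have "m = d - k"
    by simp
  then have "gvert d k s m = Inl s"
    by (simp add: gvert_def)
  with 0 obtain P where "Q = map Inl P"
    using Dk_walk_from_Inl by metis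
  with \<open>m = d - k\<close> show ?case
    by simp
next
  case (Suc l)
  then have "m < d - k" and "gvert d k s m = Inr m"
    by (simp_all add: gvert_def)
  with Suc.prems obtain a Q' where Q: "Q = a # Q'" and "a \<in> Dk_arcs A d k"
      and "Dk_tail ta d k s a = Inr m"
    by (cases Q) auto
  then obtain i where a: "a = Inr (m, i)"
    by (auto simp: Dk_arcs_def gvert_def split: if_splits)
  have "l = d - k - Suc m" and "Suc m \<le> d - k"
    using Suc.hyps(2) \<open>m < d - k\<close> by simp_all
  moreover have "set Q' \<subseteq> Dk_arcs A d k"
    and "is_walk (Dk_tail ta d k s) (Dk_head ha d k s) (gvert d k s (Suc m)) Q' (Inl y)"
    using Suc.prems Q a by simp_all
  ultimately obtain c P where "Q' = map (\<lambda>j. Inr (j, c j)) [Suc m..<d - k] @ map Inl P"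
    using Suc.hyps(1) by blast
  then have "Q = map (\<lambda>j. Inr (j, (c(m := i)) j)) [m..<d - k] @ map Inl P"
    using Q a \<open>m < d - k\<close> by (simp add: upt_conv_Cons)
  then show ?case by blast
qed

lemma is_path_Dk_sourceE:
  assumes "is_path (Dk_arcs A d k) (Dk_tail ta d k s) (Dk_head ha d k s) (Dk_source d k s) Q (Inl y)"
  obtains c P where "Q = Dk_path d k c P"
  using assms Dk_walk_from_gvert[of 0 d k Q A ta s ha y]
  unfolding is_path_def Dk_source_def Dk_path_def by auto

lemma path_length_Dk_path:
  "path_length (Dk_time \<tau> \<Delta>) (Dk_path d k c P)
     = path_length \<tau> P + card {j. j < d - k \<and> c j = 0} * \<Delta>"
proof -
  have "sum_list (map (Dk_time \<tau> \<Delta>) (map (\<lambda>j. Inr (j, c j)) [0..<d - k]))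
      = (\<Sum>j<d - k. if c j = 0 then \<Delta> else 0)"
    by (simp add: comp_def sum_list_sum_nth atLeast0LessThan)
  also have "\<dots> = (\<Sum>j\<in>{j\<in>{..<d - k}. c j = 0}. \<Delta>)"
    by (rule sum.inter_filter[symmetric]) simp
  finally show ?thesis
    by (simp add: path_length_def Dk_path_def comp_def)
qed

lemma Dk_path_disjoint_iff:
  "set (Dk_path d k c P) \<inter> set (Dk_path d k c' P') = {}
     \<longleftrightarrow> (\<forall>j<d - k. c j \<noteq> c' j) \<and> set P \<inter> set P' = {}"
  by (auto simp: set_Dk_path)

lemma sum_card_swap:
  fixes k n :: nat
  shows "(\<Sum>i<k. card {j. j < n \<and> R i j}) = (\<Sum>j<n. card {i. i < k \<and> R i j})"
proof -
  have card_as_sum: "card {x. x < m \<and> P x} = (\<Sum>x<m. if P x then 1 else 0)"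
    for m and P :: "nat \<Rightarrow> bool"
    by (simp add: sum.If_cases lessThan_def Collect_conj_eq)
  show ?thesis
    unfolding card_as_sum by (rule sum.swap)
qed

text \<open>\<open>c i j\<close> is the arc of bundle \<open>j\<close> used by path \<open>i\<close>; every arc of every bundle is used once.\<close>
definition bundle_assignment :: "nat \<Rightarrow> nat \<Rightarrow> (nat \<Rightarrow> nat \<Rightarrow> nat) \<Rightarrow> bool" where
  "bundle_assignment k n c \<longleftrightarrow> (\<forall>j<n. bij_betw (\<lambda>i. c i j) {..<k} {..<k})"

lemma bij_betw_endo_iff:
  "finite A \<Longrightarrow> bij_betw f A A \<longleftrightarrow> inj_on f A \<and> f ` A \<subseteq> A"
  unfolding bij_betw_def using endo_inj_surj by blast

lemma bundle_assignment_iff: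
  "bundle_assignment k n c \<longleftrightarrow>
     (\<forall>j<n. (\<forall>i<k. c i j < k) \<and> (\<forall>i<k. \<forall>i'<k. c i j = c i' j \<longrightarrow> i = i'))"
  unfolding bundle_assignment_def bij_betw_endo_iff[OF finite_lessThan] inj_on_def
  by blast

lemma ex_map_with_fibre_cards:
  fixes m :: "nat \<Rightarrow> nat"
  shows "\<exists>own. (\<forall>j < (\<Sum>i<k. m i). own j < k)
    \<and> (\<forall>i<k. card {j. j < (\<Sum>i<k. m i) \<and> own j = i} = m i)"
proof (induction k)
  case 0
  then show ?case by simp
next
  case (Suc k)
  define n where "n = (\<Sum>i<k. m i)"
  from Suc.IH obtain own where own: "\<forall>j<n. own j < k" "\<forall>i<k. card {j. j < n \<and> own j = i} = m i"
    unfolding n_def by blast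
  define own' where "own' j = (if j < n then own j else k)" for j
  have "own' j < Suc k" for j
    using own(1) by (simp add: own'_def less_Suc_eq)
  moreover have "card {j. j < n + m k \<and> own' j = i} = m i" if "i < Suc k" for i
  proof (cases "i = k")
    case True
    have "own' j = k \<longleftrightarrow> n \<le> j" for j
      using own(1) by (auto simp: own'_def)
    then have "{j. j < n + m k \<and> own' j = k} = {n..<n + m k}"
      unfolding atLeastLessThan_def by auto
    with True show ?thesis by simp
  next
    case False
    then have "{j. j < n + m k \<and> own' j = i} = {j. j < n \<and> own j = i}"
      by (auto simp: own'_def)
    moreover have "i < k"
      using that False by simp
    ultimately show ?thesis
      using own(2) by simp
  qed
  moreover have "(\<Sum>i<Suc k. m i) = n + m k"
    by (simp add: n_def)
  ultimately show ?case
    by (intro exI[of _ own']) simp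
qed

lemma ex_bundle_assignment:
  assumes "(\<Sum>i<k. m i) = n"
  shows "\<exists>c. bundle_assignment k n c \<and> (\<forall>i<k. card {j. j < n \<and> c i j = 0} = m i)"
proof -
  obtain own where own: "\<forall>j<n. own j < k" "\<forall>i<k. card {j. j < n \<and> own j = i} = m i"
    using ex_map_with_fibre_cards assms by blast
  define c where "c i j = Transposition.transpose (own j) 0 i" for i j
    \<comment> \<open>the owner of bundle \<open>j\<close> takes its \<open>\<Delta>\<close>-arc 0\<close>
  have "bundle_assignment k n c"
    using own(1) by (auto simp: bundle_assignment_def c_def)
  moreover have "c i j = 0 \<longleftrightarrow> own j = i" for i j
    by (auto simp: c_def transpose_eq_iff)
  ultimately show ?thesis
    using own(2) by auto
qed

lemma bundle_assignment_sum_card_zero: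
  assumes "bundle_assignment k n c" and "0 < k"
  shows "(\<Sum>i<k. card {j. j < n \<and> c i j = 0}) = n"
proof -
  have "card {i. i < k \<and> c i j = 0} = 1" if "j < n" for j
  proof -
    have bij: "bij_betw (\<lambda>i. c i j) {..<k} {..<k}"
      using assms(1) that by (simp add: bundle_assignment_def)
    then obtain i0 where "i0 < k" and "c i0 j = 0"
      using assms(2) by (metis bij_betw_iff_bijections lessThan_iff)
    moreover have "i = i0" if "i < k" and "c i j = 0" for i
      using bij_betw_imp_inj_on[OF bij] that \<open>i0 < k\<close> \<open>c i0 j = 0\<close> by (metis inj_onD lessThan_iff)
    ultimately have "{i. i < k \<and> c i j = 0} = {i0}"
      by blast
    then show ?thesis by simp
  qed
  then show ?thesis
    by (simp add: sum_card_swap)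
qed

lemma max_length_eq_makespan:
  assumes "\<forall>i<k. path_length \<tau>' (Q i) = path_length \<tau> (P i) + (\<sigma> i - 1) * \<Delta>"
  shows "max_length \<tau>' k Q = makespan \<tau> \<Delta> k P \<sigma>"
  unfolding max_length_def makespan_def using assms
  by (intro arg_cong[where f = Max] image_cong) simp_all

lemma convoy_routing_imp_Dk_paths:
  assumes "convoy_routing A ta ha s t d k P \<sigma>"
  shows "\<exists>Q. disjoint_paths (Dk_arcs A d k) (Dk_tail ta d k s) (Dk_head ha d k s)
      (Dk_source d k s) (Inl t) k Q \<and> max_length (Dk_time \<tau> \<Delta>) k Q = makespan \<tau> \<Delta> k P \<sigma>"
proof -
  from assms have paths: "\<forall>i<k. is_path A ta ha s (P i) t" and disjoint: "arc_disjoint k P"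
    and \<sigma>_pos: "\<forall>i<k. 1 \<le> \<sigma> i" and \<sigma>_sum: "(\<Sum>i<k. \<sigma> i) = d"
    by (simp_all add: convoy_routing_def disjoint_paths_def)
  have "d = (\<Sum>i<k. (\<sigma> i - 1) + 1)"
    using \<sigma>_sum \<sigma>_pos by (intro trans[OF \<sigma>_sum[symmetric]] sum.cong) auto
  also have "\<dots> = (\<Sum>i<k. \<sigma> i - 1) + k"
    by (simp only: sum.distrib) simp
  finally have "(\<Sum>i<k. \<sigma> i - 1) = d - k"
    by simp
  then obtain c where bundles: "bundle_assignment k (d - k) c"
    and zeros: "\<forall>i<k. card {j. j < d - k \<and> c i j = 0} = \<sigma> i - 1"
    using ex_bundle_assignment by blast
  define Q where "Q i = Dk_path d k (c i) (P i)" for i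
  have "\<forall>i<k. is_path (Dk_arcs A d k) (Dk_tail ta d k s) (Dk_head ha d k s)
      (Dk_source d k s) (Q i) (Inl t)"
    using bundles paths by (simp add: Q_def is_path_Dk_path_iff bundle_assignment_iff)
  moreover have "arc_disjoint k Q"
    using bundles disjoint
    by (auto simp: Q_def arc_disjoint_def Dk_path_disjoint_iff bundle_assignment_iff)
  moreover have "max_length (Dk_time \<tau> \<Delta>) k Q = makespan \<tau> \<Delta> k P \<sigma>"
    using zeros by (intro max_length_eq_makespan) (simp add: Q_def path_length_Dk_path)
  ultimately show ?thesis
    unfolding disjoint_paths_def by blast
qed

lemma Dk_paths_imp_convoy_routing:
  assumes Q: "disjoint_paths (Dk_arcs A d k) (Dk_tail ta d k s) (Dk_head ha d k s)
      (Dk_source d k s) (Inl t) k Q"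
    and "1 \<le> k" and "k \<le> d"
  shows "\<exists>P \<sigma>. convoy_routing A ta ha s t d k P \<sigma>
      \<and> makespan \<tau> \<Delta> k P \<sigma> = max_length (Dk_time \<tau> \<Delta>) k Q"
proof -
  have "\<forall>i<k. \<exists>c P. Q i = Dk_path d k c P"
    using Q is_path_Dk_sourceE unfolding disjoint_paths_def by metis
  then obtain c P where QcP: "\<forall>i<k. Q i = Dk_path d k (c i) (P i)"
    by metis
  with Q have paths: "\<forall>i<k. (\<forall>j<d - k. c i j < k) \<and> is_path A ta ha s (P i) t"
    by (simp add: disjoint_paths_def is_path_Dk_path_iff)
  from Q QcP have disjoint: "\<forall>i<k. \<forall>i'<k. i \<noteq> i' \<longrightarrow>
      (\<forall>j<d - k. c i j \<noteq> c i' j) \<and> set (P i) \<inter> set (P i') = {}"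
    by (simp add: disjoint_paths_def arc_disjoint_def Dk_path_disjoint_iff)
  have bundles: "bundle_assignment k (d - k) c"
    using paths disjoint unfolding bundle_assignment_iff by metis
  define \<sigma> where "\<sigma> i = Suc (card {j. j < d - k \<and> c i j = 0})" for i
  have "(\<Sum>i<k. \<sigma> i) = (\<Sum>i<k. card {j. j < d - k \<and> c i j = 0}) + k"
    unfolding \<sigma>_def Suc_eq_plus1 sum.distrib by simp
  also have "\<dots> = d"
    using bundle_assignment_sum_card_zero[OF bundles] assms(2,3) by simp
  finally have "convoy_routing A ta ha s t d k P \<sigma>"
    using paths disjoint assms(2,3)
    by (simp add: convoy_routing_def disjoint_paths_def arc_disjoint_def \<sigma>_def)
  moreover have "makespan \<tau> \<Delta> k P \<sigma> = max_length (Dk_time \<tau> \<Delta>) k Q"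
    using QcP by (intro max_length_eq_makespan[symmetric]) (simp add: path_length_Dk_path \<sigma>_def)
  ultimately show ?thesis
    by blast
qed

lemma objective_values_eq:
  assumes "1 \<le> k" and "k \<le> d"
  shows "{makespan \<tau> \<Delta> k P \<sigma> | P \<sigma>. convoy_routing A ta ha s t d k P \<sigma>}
    = {max_length (Dk_time \<tau> \<Delta>) k Q | Q. disjoint_paths (Dk_arcs A d k)
        (Dk_tail ta d k s) (Dk_head ha d k s) (Dk_source d k s) (Inl t) k Q}"
    (is "{_ | P \<sigma>. ?convoy P \<sigma>} = {_ | Q. ?paths Q}")
proof (intro equalityI subsetI)
  fix x
  assume "x \<in> {makespan \<tau> \<Delta> k P \<sigma> | P \<sigma>. ?convoy P \<sigma>}"
  then obtain P \<sigma> where "?convoy P \<sigma>" and "x = makespan \<tau> \<Delta> k P \<sigma>"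
    by blast
  then obtain Q where "?paths Q" and "x = max_length (Dk_time \<tau> \<Delta>) k Q"
    using convoy_routing_imp_Dk_paths by metis
  then show "x \<in> {max_length (Dk_time \<tau> \<Delta>) k Q | Q. ?paths Q}"
    by blast
next
  fix x
  assume "x \<in> {max_length (Dk_time \<tau> \<Delta>) k Q | Q. ?paths Q}"
  then obtain Q where "?paths Q" and "x = max_length (Dk_time \<tau> \<Delta>) k Q"
    by blast
  then obtain P \<sigma> where "?convoy P \<sigma>" and "x = makespan \<tau> \<Delta> k P \<sigma>"
    using Dk_paths_imp_convoy_routing assms by metis
  then show "x \<in> {makespan \<tau> \<Delta> k P \<sigma> | P \<sigma>. ?convoy P \<sigma>}"
    by blast
qed

theorem mainTheorem7:
  fixes V :: "'v set" and A :: "'a set" and ta ha :: "'a \<Rightarrow> 'v" and s t :: 'v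
    and \<tau> :: "'a \<Rightarrow> nat" and d \<Delta> k :: nat
  assumes "finite V" and "finite A"
    and "\<forall>a\<in>A. ta a \<in> V \<and> ha a \<in> V"
    and "s \<in> V" and "t \<in> V"
    and "1 \<le> d" and "1 \<le> \<Delta>"
    and "1 \<le> k" and "k \<le> d"
  shows
    "(\<forall>P \<sigma>. convoy_routing A ta ha s t d k P \<sigma> \<longrightarrow>
        (\<exists>Q. disjoint_paths (Dk_arcs A d k) (Dk_tail ta d k s) (Dk_head ha d k s)
               (Dk_source d k s) (Inl t) k Q
             \<and> max_length (Dk_time \<tau> \<Delta>) k Q = makespan \<tau> \<Delta> k P \<sigma>))
   \<and> (\<forall>Q. disjoint_paths (Dk_arcs A d k) (Dk_tail ta d k s) (Dk_head ha d k s)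
               (Dk_source d k s) (Inl t) k Q \<longrightarrow>
        (\<exists>P \<sigma>. convoy_routing A ta ha s t d k P \<sigma>
             \<and> makespan \<tau> \<Delta> k P \<sigma> = max_length (Dk_time \<tau> \<Delta>) k Q))
   \<and> ((\<exists>P \<sigma>. convoy_routing A ta ha s t d k P \<sigma>) \<longleftrightarrow>
        (\<exists>Q. disjoint_paths (Dk_arcs A d k) (Dk_tail ta d k s) (Dk_head ha d k s)
               (Dk_source d k s) (Inl t) k Q))
   \<and> ((\<exists>P \<sigma>. convoy_routing A ta ha s t d k P \<sigma>) \<longrightarrow>
        Min {makespan \<tau> \<Delta> k P \<sigma> | P \<sigma>. convoy_routing A ta ha s t d k P \<sigma>}
      = Min {max_length (Dk_time \<tau> \<Delta>) k Q | Q. disjoint_paths (Dk_arcs A d k)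
               (Dk_tail ta d k s) (Dk_head ha d k s) (Dk_source d k s) (Inl t) k Q})"
proof -
  \<comment> \<open>only \<open>1 \<le> k \<le> d\<close> is used; the minima agree without finiteness since the two sets coincide\<close>
  let ?convoy = "convoy_routing A ta ha s t d k"
  let ?paths = "disjoint_paths (Dk_arcs A d k) (Dk_tail ta d k s) (Dk_head ha d k s)
    (Dk_source d k s) (Inl t) k"
  have fwd: "\<forall>P \<sigma>. ?convoy P \<sigma> \<longrightarrow>
      (\<exists>Q. ?paths Q \<and> max_length (Dk_time \<tau> \<Delta>) k Q = makespan \<tau> \<Delta> k P \<sigma>)"
    by (intro allI impI) (rule convoy_routing_imp_Dk_paths)
  moreover have bwd: "\<forall>Q. ?paths Q \<longrightarrow>
      (\<exists>P \<sigma>. ?convoy P \<sigma> \<and> makespan \<tau> \<Delta> k P \<sigma> = max_length (Dk_time \<tau> \<Delta>) k Q)"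
    using assms(8,9) by (intro allI impI) (rule Dk_paths_imp_convoy_routing)
  moreover have "(\<exists>P \<sigma>. ?convoy P \<sigma>) \<longleftrightarrow> (\<exists>Q. ?paths Q)"
    using fwd bwd by metis
  ultimately show ?thesis
    unfolding objective_values_eq[OF assms(8,9)] by blast
qed

end
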